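(* Let $T$ be a type distribution on $\mathcal{S}\subseteq\mathbb{N}$ with $q_k=\mathbb{P}(T=k)$, $C=(C^{\text{out}},C^{\text{in}})$ a colour distribution with $p_{ij}=\mathbb{P}(C^{\text{out}}=i,C^{\text{in}}=j)$, $I:\mathcal{S}\times\mathcal{C}^{\text{out}}\to\{0,1\}$, $J:\mathcal{S}\times\mathcal{C}^{\text{in}}\to\{0,1\}$, $\mu>0$, $\lambda_i=\sum_kq_kI(k,i)$, $\varrho_j=\sum_kq_kJ(k,j)$. Assume $\mathcal{S},\mathcal{C}^{\text{out}},\mathcal{C}^{\text{in}}\subseteq\mathbb{N}$, $\mathbb{E}[T^{1+\varepsilon}]<\infty$ for some $\varepsilon>0$, $\inf_i\{\lambda_i:\lambda_i>0\}>0$ and $\inf_j\{\varrho_j:\varrho_j>0\}>0$. Then the kernel $$\kappa(t,s)=\mu\sum_{i=1}^\infty\sum_{j=1}^\infty\frac{p_{ij}I(t,i)J(s,j)}{\lambda_i\varrho_j}$$ is bounded on $\mathcal{S}\times\mathcal{S}$. *)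

theory Defs
  imports "HOL-Probability.Probability"
begin

definition lam :: "nat pmf \<Rightarrow> nat set \<Rightarrow> (nat \<Rightarrow> nat \<Rightarrow> real) \<Rightarrow> nat \<Rightarrow> real" where
  "lam q S I i = (\<Sum>\<^sub>\<infinity>k\<in>S. pmf q k * I k i)"

definition kterm :: "nat pmf \<Rightarrow> (nat \<times> nat) pmf \<Rightarrow> nat set \<Rightarrow> (nat \<Rightarrow> nat \<Rightarrow> real)
    \<Rightarrow> (nat \<Rightarrow> nat \<Rightarrow> real) \<Rightarrow> real \<Rightarrow> nat \<Rightarrow> nat \<Rightarrow> nat \<times> nat \<Rightarrow> real" where
  "kterm q p S I J \<mu> t s ij = (case ij of (i, j) \<Rightarrow>
     pmf p (i, j) * I t i * J s j / (lam q S I i * lam q S J j))"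

definition kernel :: "nat pmf \<Rightarrow> (nat \<times> nat) pmf \<Rightarrow> nat set \<Rightarrow> (nat \<Rightarrow> nat \<Rightarrow> real)
    \<Rightarrow> (nat \<Rightarrow> nat \<Rightarrow> real) \<Rightarrow> real \<Rightarrow> nat \<Rightarrow> nat \<Rightarrow> real" where
  "kernel q p S I J \<mu> t s = \<mu> * (\<Sum>\<^sub>\<infinity>ij\<in>{1..} \<times> {1..}. kterm q p S I J \<mu> t s ij)"

end

theory Submission
  imports Defs
begin

text \<open>Since \<open>I\<close> and \<open>J\<close> take values in \<open>{0, 1}\<close>, the summand of \<open>\<kappa>(t, s)\<close> at a colour pair
  \<open>(i, j)\<close> is at most \<open>p\<^sub>i\<^sub>j / (\<lambda>\<^sub>i \<rho>\<^sub>j)\<close>, and it vanishes unless both denominators are positive;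
  positive denominators are bounded below by the infima \<open>L\<close> and \<open>R\<close> of the hypotheses. So the
  summands are dominated by \<open>p\<^sub>i\<^sub>j / (L R)\<close>, and summing the probabilities \<open>p\<^sub>i\<^sub>j\<close> gives
  \<open>\<kappa> \<le> \<mu> / (L R)\<close> uniformly in \<open>t\<close> and \<open>s\<close>.\<close>

lemma pmf_summable_on: "pmf p summable_on A"
  using pmf_abs_summable[of p A] abs_summable_equivalent[of "pmf p" A] by simp

lemma infsum_pmf_le_1: "infsum (pmf p) A \<le> 1"
  using measure_pmf.prob_le_1[of p A]
  by (simp add: measure_pmf_conv_infsetsum infsetsum_infsum pmf_abs_summable)

lemma
  fixes f :: "'a \<Rightarrow> 'b::banach"
  assumes "0 \<le> c" and dom: "\<And>x. x \<in> A \<Longrightarrow> norm (f x) \<le> c * pmf p x"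
  shows summable_on_dominated_by_pmf: "f summable_on A"
    and norm_infsum_dominated_by_pmf: "norm (infsum f A) \<le> c"
proof -
  have cp_summable: "(\<lambda>x. c * pmf p x) summable_on A"
    by (intro summable_on_cmult_right pmf_summable_on)
  have norm_summable: "(\<lambda>x. norm (f x)) summable_on A"
    using cp_summable dom by (rule Infinite_Sum.abs_summable_on_comparison_test')
  then show "f summable_on A"
    by (rule abs_summable_summable)
  have "norm (infsum f A) \<le> infsum (\<lambda>x. norm (f x)) A"
    using norm_summable by (rule norm_infsum_bound)
  also have "\<dots> \<le> infsum (\<lambda>x. c * pmf p x) A"
    using norm_summable cp_summable dom by (rule infsum_mono)
  also have "\<dots> = c * infsum (pmf p) A"
    by (rule infsum_cmult_right')
  also have "\<dots> \<le> c"
    using \<open>0 \<le> c\<close> infsum_pmf_le_1[of p A] by (simp add: mult_left_le)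
  finally show "norm (infsum f A) \<le> c" .
qed

lemma cInf_positive_le:
  fixes f :: "'a \<Rightarrow> real"
  assumes "i \<in> C" and "0 < f i"
  shows "Inf {f i | i. i \<in> C \<and> 0 < f i} \<le> f i"
  using assms by (intro cInf_lower bdd_belowI[of _ 0]) auto

lemma lam_nonneg:
  assumes "\<And>k. k \<in> S \<Longrightarrow> 0 \<le> I k i"
  shows "0 \<le> lam q S I i"
  unfolding lam_def using assms by (intro infsum_nonneg) simp

lemma abs_kterm_le:
  assumes "t \<in> S" and "s \<in> S"
    and I_01: "\<And>k. k \<in> S \<Longrightarrow> I k i \<in> {0, 1}"
    and J_01: "\<And>k. k \<in> S \<Longrightarrow> J k j \<in> {0, 1}"
    and "0 < L" and "0 < R"
    and L_le: "0 < lam q S I i \<Longrightarrow> L \<le> lam q S I i"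
    and R_le: "0 < lam q S J j \<Longrightarrow> R \<le> lam q S J j"
  shows "\<bar>kterm q p S I J \<mu> t s (i, j)\<bar> \<le> pmf p (i, j) / (L * R)"
proof -
  have "0 \<le> lam q S I i" and "0 \<le> lam q S J j"
    using I_01 J_01 by (force intro: lam_nonneg)+
  have IJ: "\<bar>I t i * J s j\<bar> \<le> 1"
    using I_01[OF \<open>t \<in> S\<close>] J_01[OF \<open>s \<in> S\<close>] by auto
  show ?thesis
  proof (cases "lam q S I i = 0 \<or> lam q S J j = 0")
    case True
    \<comment> \<open>the summand is then \<open>0\<close>, by the junk value \<open>x / 0 = 0\<close>\<close>
    with \<open>0 < L\<close> \<open>0 < R\<close> show ?thesis by (auto simp: kterm_def)
  next
    case False
    with \<open>0 \<le> lam q S I i\<close> \<open>0 \<le> lam q S J j\<close>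
    have pos: "0 < lam q S I i" "0 < lam q S J j" by auto
    have LR: "L * R \<le> lam q S I i * lam q S J j"
      using L_le[OF pos(1)] R_le[OF pos(2)] \<open>0 < L\<close> \<open>0 < R\<close> by (intro mult_mono) auto
    have "\<bar>kterm q p S I J \<mu> t s (i, j)\<bar>
        = pmf p (i, j) * \<bar>I t i * J s j\<bar> / (lam q S I i * lam q S J j)"
      using pos by (simp add: kterm_def abs_mult)
    also have "\<dots> \<le> pmf p (i, j) / (lam q S I i * lam q S J j)"
      using pos IJ by (intro divide_right_mono mult_left_le) auto
    also have "\<dots> \<le> pmf p (i, j) / (L * R)"
      using LR pos \<open>0 < L\<close> \<open>0 < R\<close> by (intro divide_left_mono) auto
    finally show ?thesis .
  qed
qed

theorem lemma6:
  fixes q :: "nat pmf" and p :: "(nat \<times> nat) pmf"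
    and S Cout Cin :: "nat set"
    and I J :: "nat \<Rightarrow> nat \<Rightarrow> real"
    and \<mu> \<epsilon> :: real
  assumes q_on_S: "set_pmf q \<subseteq> S"
    and p_on_C: "set_pmf p \<subseteq> Cout \<times> Cin"
    and I_01: "\<And>k i. k \<in> S \<Longrightarrow> i \<in> Cout \<Longrightarrow> I k i \<in> {0, 1}"
    and J_01: "\<And>k j. k \<in> S \<Longrightarrow> j \<in> Cin \<Longrightarrow> J k j \<in> {0, 1}"
    and mu_pos: "\<mu> > 0"
    and eps_pos: "\<epsilon> > 0"
    and moment: "integrable (measure_pmf q) (\<lambda>k. real k powr (1 + \<epsilon>))"
    and inf_lam: "Inf {lam q S I i | i. i \<in> Cout \<and> lam q S I i > 0} > 0"
    and inf_rho: "Inf {lam q S J j | j. j \<in> Cin \<and> lam q S J j > 0} > 0"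
  shows "\<exists>M. \<forall>t\<in>S. \<forall>s\<in>S.
           kterm q p S I J \<mu> t s summable_on ({1..} \<times> {1..}) \<and>
           \<bar>kernel q p S I J \<mu> t s\<bar> \<le> M"
proof (intro exI ballI conjI)
  define L where "L = Inf {lam q S I i | i. i \<in> Cout \<and> lam q S I i > 0}"
  define R where "R = Inf {lam q S J j | j. j \<in> Cin \<and> lam q S J j > 0}"
  have "0 < L" "0 < R"
    using inf_lam inf_rho by (simp_all add: L_def R_def)
  fix t s assume "t \<in> S" "s \<in> S"
  have dom: "norm (kterm q p S I J \<mu> t s ij) \<le> 1 / (L * R) * pmf p ij" for ij
  proof (cases "ij \<in> set_pmf p")
    case True
    then obtain i j where ij: "ij = (i, j)" "i \<in> Cout" "j \<in> Cin"
      using p_on_C by auto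
    show ?thesis
      unfolding ij(1) using \<open>t \<in> S\<close> \<open>s \<in> S\<close> I_01 J_01 ij(2,3) \<open>0 < L\<close> \<open>0 < R\<close>
      by (simp add: abs_kterm_le L_def R_def cInf_positive_le)
  qed (auto simp: set_pmf_eq kterm_def split: prod.split)
  have "0 \<le> 1 / (L * R)"
    using \<open>0 < L\<close> \<open>0 < R\<close> by simp
  from summable_on_dominated_by_pmf[OF this dom]
  show "kterm q p S I J \<mu> t s summable_on ({1..} \<times> {1..})" .
  have "\<bar>kernel q p S I J \<mu> t s\<bar> = \<mu> * norm (infsum (kterm q p S I J \<mu> t s) ({1..} \<times> {1..}))"
    using mu_pos by (simp add: kernel_def abs_mult)
  also have "\<dots> \<le> \<mu> * (1 / (L * R))"
    using norm_infsum_dominated_by_pmf[OF \<open>0 \<le> 1 / (L * R)\<close> dom] mu_pos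
    by (intro mult_left_mono) auto
  finally show "\<bar>kernel q p S I J \<mu> t s\<bar> \<le> \<mu> * (1 / (L * R))" .
qed

end
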